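(* Let $(X,T)$ and $(Y,S)$ be dynamical systems. The following are equivalent: (1) $(X,T)$ and $(Y,S)$ are weakly disjoint; (2) both $\mathrm{Tran}_{k\mathcal{N}_S}(X,T)$ and $\mathrm{Tran}_{k\mathcal{N}_T}(Y,S)$ are dense $G_\delta$ subsets (of $X$ and $Y$ respectively); (3) $\mathrm{Tran}_{k\mathcal{N}_S}(X,T)$ is a dense $G_\delta$ subset of $X$; (4) both $\mathrm{Tran}_{k\mathcal{N}_S}(X,T)$ and $\mathrm{Tran}_{k\mathcal{N}_T}(Y,S)$ are nonempty; (5) $\mathrm{Tran}_{k\mathcal{N}_S}(X,T)$ is nonempty.
   Context: A dynamical system $(X,T)$: $X$ is a compact metric space with more than one point and without isolated points, $T:X\to X$ a continuous surjection. "Opene" means open and nonempty. $N_T(U,V)=\{n\in\mathbb{Z}_+:U\cap T^{-n}V\neq\varnothing\}$; $\mathcal{N}_T$ is the family of all subsets of $\mathbb{Z}_+$ containing $N_T(U,V)$ for some opene $U,V\subset X$ (similarly $\mathcal{N}_S$ for $(Y,S)$). For a family $\mathcal{F}$ of subsets of $\mathbb{Z}_+$, its dual is $k\mathcal{F}=\{F\subset\mathbb{Z}_+:F\cap F'\neq\varnothing\ \forall F'\in\mathcal{F}\}$. For $x\in X$ and $G\subset X$, $n_T(x,G)=\{n\in\mathbb{Z}_+:T^nx\in G\}$; $\mathrm{Tran}_{\mathcal{F}}(X,T)$ is the set of $x\in X$ with $n_T(x,U)\in\mathcal{F}$ for every opene $U\subset X$. $(X,T)$ and $(Y,S)$ are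 weakly disjoint if $(X\times Y,T\times S)$ is transitive, i.e. $N_{T\times S}(A,B)\neq\varnothing$ for all opene $A,B\subset X\times Y$. *)

theory Defs
  imports "HOL-Analysis.Analysis"
begin

definition dyn_sys :: "'a::metric_space set \<Rightarrow> ('a \<Rightarrow> 'a) \<Rightarrow> bool" where
  "dyn_sys X T \<longleftrightarrow> compact X \<and> (\<exists>x\<in>X. \<exists>y\<in>X. x \<noteq> y) \<and> (\<forall>x\<in>X. x islimpt X)
     \<and> continuous_on X T \<and> T ` X = X"

definition opene :: "'a::topological_space set \<Rightarrow> 'a set \<Rightarrow> bool" where
  "opene X U \<longleftrightarrow> openin (top_of_set X) U \<and> U \<noteq> {}"

definition hit_times :: "('a \<Rightarrow> 'a) \<Rightarrow> 'a set \<Rightarrow> 'a set \<Rightarrow> nat set" where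
  "hit_times T U V = {n. \<exists>x\<in>U. (T ^^ n) x \<in> V}"

definition hit_family :: "'a::topological_space set \<Rightarrow> ('a \<Rightarrow> 'a) \<Rightarrow> nat set set" where
  "hit_family X T = {F. \<exists>U V. opene X U \<and> opene X V \<and> hit_times T U V \<subseteq> F}"

definition dual_family :: "nat set set \<Rightarrow> nat set set" where
  "dual_family \<F> = {F. \<forall>F'\<in>\<F>. F \<inter> F' \<noteq> {}}"

definition visit_times :: "('a \<Rightarrow> 'a) \<Rightarrow> 'a \<Rightarrow> 'a set \<Rightarrow> nat set" where
  "visit_times T x G = {n. (T ^^ n) x \<in> G}"

definition Tran :: "nat set set \<Rightarrow> 'a::topological_space set \<Rightarrow> ('a \<Rightarrow> 'a) \<Rightarrow> 'a set" where
  "Tran \<F> X T = {x\<in>X. \<forall>U. opene X U \<longrightarrow> visit_times T x U \<in> \<F>}"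

definition weakly_disjoint :: "'a::topological_space set \<Rightarrow> ('a \<Rightarrow> 'a) \<Rightarrow>
    'b::topological_space set \<Rightarrow> ('b \<Rightarrow> 'b) \<Rightarrow> bool" where
  "weakly_disjoint X T Y S \<longleftrightarrow>
     (\<forall>A B. opene (X \<times> Y) A \<longrightarrow> opene (X \<times> Y) B \<longrightarrow>
        hit_times (\<lambda>(x, y). (T x, S y)) A B \<noteq> {})"

definition dense_gdelta :: "'a::topological_space set \<Rightarrow> 'a set \<Rightarrow> bool" where
  "dense_gdelta X D \<longleftrightarrow> D \<subseteq> X \<and> (top_of_set X) closure_of D = X \<and> gdelta_in (top_of_set X) D"

end

theory Submission
  imports Defs
begin

text \<open>
  Weak disjointness is equivalent to its rectangle form: \<open>N_T(U,U') \<inter> N_S(V,V') \<noteq> {}\<close> for all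
  opene \<open>U, U' \<subseteq> X\<close> and \<open>V, V' \<subseteq> Y\<close>, a condition symmetric in the two systems. If \<open>x\<close> lies in
  \<open>Tran_{kN_S}(X,T)\<close>, pick \<open>m\<close> with \<open>T^m x \<in> U\<close>; a visit of \<open>x\<close> to the pullback of \<open>U'\<close> under
  \<open>T^m\<close> at a time \<open>k \<in> N_S(V,V')\<close> gives \<open>k \<in> N_T(U,U')\<close>. Conversely, under weak disjointness
  every set \<open>{x. n_T(x,U) \<inter> N_S(V,W) \<noteq> {}}\<close> is open and dense, and \<open>Tran_{kN_S}(X,T)\<close> is the
  intersection of countably many of them (with \<open>U, V, W\<close> from countable \<open>\<pi>\<close>-bases of the
  compact metric spaces), so it is a dense \<open>G\<^sub>\<delta>\<close> by Baire's theorem.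
\<close>

lemma funpow_map_prod:
  fixes T :: "'a \<Rightarrow> 'a" and S :: "'b \<Rightarrow> 'b"
  shows "((\<lambda>(x, y). (T x, S y)) ^^ n) (x, y) = ((T ^^ n) x, (S ^^ n) y)"
  by (induction n) auto

lemma funpow_image_eq:
  assumes "T ` X = X" shows "(T ^^ n) ` X = X"
  by (induction n) (simp_all, metis assms image_image)

lemma funpow_image_subset:
  assumes "T ` X \<subseteq> X" shows "(T ^^ n) ` X \<subseteq> X"
  using assms by (induction n) (auto simp: image_subset_iff)

lemma continuous_on_funpow:
  assumes "continuous_on X T" "T ` X \<subseteq> X"
  shows "continuous_on X (T ^^ n)"
proof (induction n)
  case (Suc n)
  then show ?case
    using assms funpow_image_subset[OF assms(2)]
    by (simp add: continuous_on_compose2[of X T])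
qed simp

lemma openin_preimage_funpow:
  assumes "continuous_on X T" "T ` X \<subseteq> X" "openin (top_of_set X) U"
  shows "openin (top_of_set X) (X \<inter> (T ^^ n) -` U)"
proof (rule continuous_openin_preimage[OF continuous_on_funpow[OF assms(1,2)] _ assms(3)])
  show "(T ^^ n) \<in> X \<rightarrow> X"
    using funpow_image_subset[OF assms(2)] by blast
qed

lemma opene_Times:
  "opene X U \<Longrightarrow> opene Y V \<Longrightarrow> opene (X \<times> Y) (U \<times> V)"
  by (auto simp: opene_def openin_Times)

lemma opene_Times_subset:
  assumes "opene (X \<times> Y) A"
  obtains U V where "opene X U" "opene Y V" "U \<times> V \<subseteq> A"
proof -
  obtain G where G: "open G" "A = G \<inter> (X \<times> Y)" and "A \<noteq> {}"
    using assms unfolding opene_def openin_open by blast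
  then obtain a b where ab: "(a, b) \<in> A" by auto
  with G obtain U V where "open U" "open V" "(a, b) \<in> U \<times> V" "U \<times> V \<subseteq> G"
    by (metis IntD1 open_prod_elim)
  then show ?thesis
    using G ab by (intro that[of "X \<inter> U" "Y \<inter> V"]) (auto simp: opene_def openin_open_Int)
qed

lemma hit_times_mono:
  "A \<subseteq> A' \<Longrightarrow> B \<subseteq> B' \<Longrightarrow> hit_times T A B \<subseteq> hit_times T A' B'"
  by (auto simp: hit_times_def)

lemma weakly_disjoint_iff:
  "weakly_disjoint X T Y S \<longleftrightarrow>
     (\<forall>U U' V V'. opene X U \<longrightarrow> opene X U' \<longrightarrow> opene Y V \<longrightarrow> opene Y V' \<longrightarrow>
        hit_times T U U' \<inter> hit_times S V V' \<noteq> {})"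
proof -
  have hit_times_Times:
    "hit_times (\<lambda>(x, y). (T x, S y)) (U \<times> V) (U' \<times> V') = hit_times T U U' \<inter> hit_times S V V'"
    for U U' V V' by (auto simp: hit_times_def funpow_map_prod)
  show ?thesis
    unfolding weakly_disjoint_def
  proof (intro iffI allI impI)
    fix U U' V V'
    assume wd: "\<forall>A B. opene (X \<times> Y) A \<longrightarrow> opene (X \<times> Y) B \<longrightarrow>
        hit_times (\<lambda>(x, y). (T x, S y)) A B \<noteq> {}"
      and "opene X U" "opene X U'" "opene Y V" "opene Y V'"
    then have "hit_times (\<lambda>(x, y). (T x, S y)) (U \<times> V) (U' \<times> V') \<noteq> {}"
      by (simp add: opene_Times)
    then show "hit_times T U U' \<inter> hit_times S V V' \<noteq> {}"
      by (simp add: hit_times_Times)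
  next
    fix A B
    assume box: "\<forall>U U' V V'. opene X U \<longrightarrow> opene X U' \<longrightarrow> opene Y V \<longrightarrow> opene Y V' \<longrightarrow>
        hit_times T U U' \<inter> hit_times S V V' \<noteq> {}"
      and "opene (X \<times> Y) A" "opene (X \<times> Y) B"
    then obtain U V U' V' where UV: "opene X U" "opene Y V" "U \<times> V \<subseteq> A"
      and UV': "opene X U'" "opene Y V'" "U' \<times> V' \<subseteq> B"
      by (metis opene_Times_subset)
    have "hit_times (\<lambda>(x, y). (T x, S y)) (U \<times> V) (U' \<times> V') \<noteq> {}"
      using box UV UV' by (simp add: hit_times_Times)
    moreover have "hit_times (\<lambda>(x, y). (T x, S y)) (U \<times> V) (U' \<times> V') \<subseteq>
        hit_times (\<lambda>(x, y). (T x, S y)) A B"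
      using UV(3) UV'(3) by (rule hit_times_mono)
    ultimately show "hit_times (\<lambda>(x, y). (T x, S y)) A B \<noteq> {}"
      by blast
  qed
qed

lemma weakly_disjoint_commute:
  "weakly_disjoint X T Y S \<longleftrightarrow> weakly_disjoint Y S X T"
  unfolding weakly_disjoint_iff by (simp add: Int_commute) blast

lemma dual_hit_family_iff:
  "F \<in> dual_family (hit_family Y S) \<longleftrightarrow>
     (\<forall>V W. opene Y V \<longrightarrow> opene Y W \<longrightarrow> F \<inter> hit_times S V W \<noteq> {})"
  unfolding dual_family_def hit_family_def by blast

lemma Tran_dual_hit_family_iff:
  "x \<in> Tran (dual_family (hit_family Y S)) X T \<longleftrightarrow> x \<in> X \<and>
     (\<forall>U V W. opene X U \<longrightarrow> opene Y V \<longrightarrow> opene Y W \<longrightarrow>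
        visit_times T x U \<inter> hit_times S V W \<noteq> {})"
  unfolding Tran_def dual_hit_family_iff by blast

lemma Tran_nonempty_imp_weakly_disjoint:
  assumes "continuous_on X T" "T ` X = X"
    and "Tran (dual_family (hit_family Y S)) X T \<noteq> {}"
  shows "weakly_disjoint X T Y S"
  unfolding weakly_disjoint_iff
proof (intro allI impI)
  fix U U' V V'
  assume U: "opene X U" and U': "opene X U'" and V: "opene Y V" "opene Y V'"
  obtain x where "x \<in> Tran (dual_family (hit_family Y S)) X T"
    using assms(3) by blast
  then have x: "\<And>U V W. opene X U \<Longrightarrow> opene Y V \<Longrightarrow> opene Y W \<Longrightarrow>
      visit_times T x U \<inter> hit_times S V W \<noteq> {}"
    by (simp add: Tran_dual_hit_family_iff)
  obtain m where m: "(T ^^ m) x \<in> U"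
    using x[OF U V] unfolding visit_times_def by blast
  define U'' where "U'' = X \<inter> (T ^^ m) -` U'"
  have "opene X U''"
  proof -
    have "U' \<subseteq> X" "U' \<noteq> {}"
      using U' by (auto simp: opene_def dest: openin_imp_subset)
    then obtain u where "u \<in> U'" "u \<in> (T ^^ m) ` X"
      using funpow_image_eq[OF assms(2), of m] by blast
    then have "U'' \<noteq> {}"
      unfolding U''_def by blast
    moreover have "openin (top_of_set X) U''"
      unfolding U''_def using U' assms(1,2) by (intro openin_preimage_funpow) (auto simp: opene_def)
    ultimately show ?thesis
      by (simp add: opene_def)
  qed
  then obtain k where k: "(T ^^ k) x \<in> U''" "k \<in> hit_times S V V'"
    using x[OF _ V] unfolding visit_times_def by blast
  have "(T ^^ k) ((T ^^ m) x) = (T ^^ m) ((T ^^ k) x)"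
    by (metis funpow_add add.commute comp_apply)
  then have "(T ^^ k) ((T ^^ m) x) \<in> U'"
    using k(1) by (simp add: U''_def)
  then have "k \<in> hit_times T U U'"
    using m unfolding hit_times_def by blast
  then show "hit_times T U U' \<inter> hit_times S V V' \<noteq> {}"
    using k(2) by blast
qed

lemma countable_pi_base:
  fixes X :: "'a::metric_space set"
  assumes "compact X"
  obtains P where "countable P" "\<And>B. B \<in> P \<Longrightarrow> opene X B" "\<And>U. opene X U \<Longrightarrow> \<exists>B\<in>P. B \<subseteq> U"
proof -
  have "\<exists>F. finite F \<and> X \<subseteq> (\<Union>c\<in>F. ball c (inverse (Suc k)))" for k :: nat
    using assms compact_eq_totally_bounded by (metis inverse_positive_iff_positive of_nat_0_less_iff zero_less_Suc)
  then obtain F where F: "\<And>k. finite (F k)" "\<And>k. X \<subseteq> (\<Union>c\<in>F k. ball c (inverse (Suc k)))"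
    by metis
  define P where "P = {B. \<exists>k. \<exists>c\<in>F k. B = X \<inter> ball c (inverse (Suc k)) \<and> B \<noteq> {}}"
  have "P \<subseteq> (\<lambda>(k, c). X \<inter> ball c (inverse (Suc k))) ` (SIGMA k:UNIV. F k)"
    unfolding P_def by auto
  moreover have "countable (SIGMA k:UNIV. F k)"
    using F(1) by (intro countable_SIGMA) (auto intro: countable_finite)
  ultimately have "countable P"
    by (meson countable_image countable_subset)
  moreover have "opene X B" if "B \<in> P" for B
    using that unfolding P_def opene_def by auto
  moreover have "\<exists>B\<in>P. B \<subseteq> U" if U: "opene X U" for U
  proof -
    obtain u e where "u \<in> U" "u \<in> X" "e > 0" and e: "ball u e \<inter> X \<subseteq> U"
      using U unfolding opene_def openin_contains_ball by blast
    obtain k where k: "inverse (Suc k) < e / 2"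
      using reals_Archimedean[of "e / 2"] \<open>e > 0\<close> by auto
    obtain c where c: "c \<in> F k" "u \<in> ball c (inverse (Suc k))"
      using F(2)[of k] \<open>u \<in> X\<close> by blast
    have "ball c (inverse (Suc k)) \<subseteq> ball u e"
    proof
      fix z assume "z \<in> ball c (inverse (Suc k))"
      then have "dist u c + dist c z < e"
        using c(2) k by (simp add: dist_commute)
      then show "z \<in> ball u e"
        using dist_triangle[of u z c] by simp
    qed
    moreover have "X \<inter> ball c (inverse (Suc k)) \<in> P"
      unfolding P_def using c \<open>u \<in> X\<close> by blast
    ultimately show ?thesis
      using e by blast
  qed
  ultimately show ?thesis
    using that by blast
qed

lemma dense_gdelta_Inter:
  fixes X :: "'a::metric_space set"
  assumes "compact X" "countable \<G>"
    and "\<And>G. G \<in> \<G> \<Longrightarrow> openin (top_of_set X) G \<and> top_of_set X closure_of G = X"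
  shows "dense_gdelta X (X \<inter> \<Inter>\<G>)"
proof -
  have "compact_space (top_of_set X)" "Hausdorff_space (top_of_set X)"
    using assms(1) by (simp_all add: compact_space_subtopology Hausdorff_space_subtopology)
  then have "locally_compact_space (top_of_set X)" "regular_space (top_of_set X)"
    by (simp_all add: compact_imp_locally_compact_space compact_Hausdorff_imp_regular_space)
  then have "top_of_set X closure_of \<Inter>\<G> = X"
    using assms(2,3) by (subst Baire_category) auto
  then have "top_of_set X closure_of (X \<inter> \<Inter>\<G>) = X"
    by (metis closure_of_restrict topspace_euclidean_subtopology)
  moreover have "gdelta_in (top_of_set X) (\<Inter>(insert X \<G>))"
    using assms(2,3) by (intro gdelta_in_Inter open_imp_gdelta_in) auto
  ultimately show ?thesis
    unfolding dense_gdelta_def by simp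
qed

lemma openin_visit_times_meeting:
  assumes "continuous_on X T" "T ` X \<subseteq> X" "openin (top_of_set X) U"
  shows "openin (top_of_set X) {x \<in> X. visit_times T x U \<inter> N \<noteq> {}}"
proof -
  have "{x \<in> X. visit_times T x U \<inter> N \<noteq> {}} = (\<Union>n\<in>N. X \<inter> (T ^^ n) -` U)"
    by (auto simp: visit_times_def)
  moreover have "openin (top_of_set X) (\<Union>n\<in>N. X \<inter> (T ^^ n) -` U)"
    using openin_preimage_funpow[OF assms] by (intro openin_Union) auto
  ultimately show ?thesis
    by simp
qed

lemma dense_visit_times_meeting_hit_times:
  assumes "weakly_disjoint X T Y S" "opene X U" "opene Y V" "opene Y W"
  shows "top_of_set X closure_of {x \<in> X. visit_times T x U \<inter> hit_times S V W \<noteq> {}} = X"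
proof -
  have "{x \<in> X. visit_times T x U \<inter> hit_times S V W \<noteq> {}} \<inter> Q \<noteq> {}"
    if "openin (top_of_set X) Q" "Q \<noteq> {}" for Q
  proof -
    have Q: "opene X Q" "Q \<subseteq> X"
      using that by (auto simp: opene_def dest: openin_imp_subset)
    then obtain n where "n \<in> hit_times T Q U" "n \<in> hit_times S V W"
      using assms unfolding weakly_disjoint_iff by blast
    then show ?thesis
      using Q(2) by (auto simp: hit_times_def visit_times_def)
  qed
  then show ?thesis
    using dense_intersects_open[of "top_of_set X"] by simp
qed

lemma weakly_disjoint_imp_dense_gdelta_Tran:
  fixes X :: "'a::metric_space set" and Y :: "'b::metric_space set"
  assumes "compact X" "compact Y" "continuous_on X T" "T ` X \<subseteq> X"
    and "weakly_disjoint X T Y S"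
  shows "dense_gdelta X (Tran (dual_family (hit_family Y S)) X T)"
proof -
  obtain PX where PX: "countable PX" "\<And>B. B \<in> PX \<Longrightarrow> opene X B"
    "\<And>U. opene X U \<Longrightarrow> \<exists>B\<in>PX. B \<subseteq> U"
    using countable_pi_base[OF assms(1)] by blast
  obtain PY where PY: "countable PY" "\<And>B. B \<in> PY \<Longrightarrow> opene Y B"
    "\<And>U. opene Y U \<Longrightarrow> \<exists>B\<in>PY. B \<subseteq> U"
    using countable_pi_base[OF assms(2)] by blast
  define G where "G = (\<lambda>(U, V, W). {x \<in> X. visit_times T x U \<inter> hit_times S V W \<noteq> {}})"
  have G_mono: "G (U, V, W) \<subseteq> G (U', V', W')" if "U \<subseteq> U'" "V \<subseteq> V'" "W \<subseteq> W'" for U V W U' V' W'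
    using that hit_times_mono[of V V' W W' S] by (auto simp: G_def visit_times_def)
  have "Tran (dual_family (hit_family Y S)) X T = X \<inter> \<Inter>(G ` (PX \<times> PY \<times> PY))"
  proof (intro set_eqI iffI)
    fix x assume "x \<in> Tran (dual_family (hit_family Y S)) X T"
    then show "x \<in> X \<inter> \<Inter>(G ` (PX \<times> PY \<times> PY))"
      using PX(2) PY(2) by (auto simp: Tran_dual_hit_family_iff G_def)
  next
    fix x assume x: "x \<in> X \<inter> \<Inter>(G ` (PX \<times> PY \<times> PY))"
    have "x \<in> G (U, V, W)" if UVW: "opene X U" "opene Y V" "opene Y W" for U V W
    proof -
      obtain B where "B \<in> PX" "B \<subseteq> U"
        using PX(3) UVW(1) by blast
      moreover obtain C where "C \<in> PY" "C \<subseteq> V"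
        using PY(3) UVW(2) by blast
      moreover obtain D where "D \<in> PY" "D \<subseteq> W"
        using PY(3) UVW(3) by blast
      ultimately show ?thesis
        using x G_mono[of B U C V D W] by blast
    qed
    then show "x \<in> Tran (dual_family (hit_family Y S)) X T"
      using x by (simp add: Tran_dual_hit_family_iff G_def)
  qed
  moreover have "countable (G ` (PX \<times> PY \<times> PY))"
    using PX(1) PY(1) by auto
  moreover have "openin (top_of_set X) g \<and> top_of_set X closure_of g = X"
    if g_mem: "g \<in> G ` (PX \<times> PY \<times> PY)" for g
  proof -
    obtain U V W where UVW: "opene X U" "opene Y V" "opene Y W"
      and g: "g = {x \<in> X. visit_times T x U \<inter> hit_times S V W \<noteq> {}}"
      using g_mem PX(2) PY(2) unfolding G_def by blast
    then show ?thesis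
      using openin_visit_times_meeting[OF assms(3,4)] dense_visit_times_meeting_hit_times[OF assms(5) UVW]
      by (simp add: opene_def)
  qed
  ultimately show ?thesis
    using dense_gdelta_Inter[OF assms(1)] by simp
qed

lemma dense_gdelta_nonempty: "dense_gdelta X D \<Longrightarrow> X \<noteq> {} \<Longrightarrow> D \<noteq> {}"
  by (auto simp: dense_gdelta_def)

lemma dyn_sysD:
  assumes "dyn_sys X T"
  shows "compact X" "continuous_on X T" "T ` X = X" "X \<noteq> {}"
  using assms unfolding dyn_sys_def by (simp_all, fast)

theorem theorem5p2:
  fixes X :: "'a::metric_space set" and T :: "'a \<Rightarrow> 'a"
    and Y :: "'b::metric_space set" and S :: "'b \<Rightarrow> 'b"
  assumes "dyn_sys X T" and "dyn_sys Y S"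
  defines "TX \<equiv> Tran (dual_family (hit_family Y S)) X T"
      and "TY \<equiv> Tran (dual_family (hit_family X T)) Y S"
  shows "(weakly_disjoint X T Y S \<longleftrightarrow> dense_gdelta X TX \<and> dense_gdelta Y TY)
       \<and> (dense_gdelta X TX \<and> dense_gdelta Y TY \<longleftrightarrow> dense_gdelta X TX)
       \<and> (dense_gdelta X TX \<longleftrightarrow> TX \<noteq> {} \<and> TY \<noteq> {})
       \<and> (TX \<noteq> {} \<and> TY \<noteq> {} \<longleftrightarrow> TX \<noteq> {})"
proof -
  note X = dyn_sysD[OF assms(1)] and Y = dyn_sysD[OF assms(2)]
  have "dense_gdelta X TX \<and> dense_gdelta Y TY" if wd: "weakly_disjoint X T Y S"
    using weakly_disjoint_imp_dense_gdelta_Tran[OF X(1) Y(1) X(2) _ wd]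
      weakly_disjoint_imp_dense_gdelta_Tran[OF Y(1) X(1) Y(2) _ weakly_disjoint_commute[THEN iffD1, OF wd]]
      X(3) Y(3)
    unfolding TX_def TY_def by simp
  moreover have "TX \<noteq> {} \<Longrightarrow> weakly_disjoint X T Y S"
    unfolding TX_def using X by (intro Tran_nonempty_imp_weakly_disjoint)
  moreover have "dense_gdelta X TX \<Longrightarrow> TX \<noteq> {}" "dense_gdelta Y TY \<Longrightarrow> TY \<noteq> {}"
    using dense_gdelta_nonempty X(4) Y(4) by blast+
  ultimately show ?thesis
    by argo
qed

end
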